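(* Let $N\ge 1$, $d\ge 1$, $T>0$, $M>0$, and let $\alpha=(\alpha_1,\dots,\alpha_N)\in\mathcal U_M$. Let $(x_i,v_i)_{i=1}^N$, with $x_i(t),v_i(t)\in\mathbb R^d$, solve on $[0,T]$ $$\dot x_i=v_i,\qquad \dot v_i=-\alpha_i v_i+(1-\alpha_i)\frac1N\sum_{j=1}^N (v_j-v_i),\qquad i=1,\dots,N,$$ and let $\bar v=\frac1N\sum_i v_i$. Assume $\bar v(0)\neq 0$, put $e=\bar v(0)/\|\bar v(0)\|$, $\xi_i=\langle v_i,e\rangle$, $\bar\xi=\frac1N\sum_i\xi_i$, and assume $\xi_1(0)\ge\xi_2(0)\ge\dots\ge\xi_N(0)$. Then $\bar v(t)\neq 0$ and $\bar\xi(t)>0$ for all $t\in[0,T]$. Moreover, for every $\tau\in[0,T]$ and every $i$: if $\xi_i(\tau)\ge 0$ then $\xi_i(t)\ge 0$ for all $t\in[\tau,T]$, and if $\xi_i(\tau)>0$ then $\xi_i(t)>0$ for all $t\in[\tau,T]$.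
   Context: $\mathcal U_M$ denotes the set of measurable maps $\alpha:[0,T]\to[0,1]^N$ such that $\sum_{i=1}^N\alpha_i(t)\le M$ for all $t\in[0,T]$. (This is a collective migration model with target velocity $0$, in which $\alpha_i$ balances attraction to the target velocity against alignment with the group.) *)

theory Defs
  imports "HOL-Analysis.Analysis"
begin

text \<open>Controls are indexed by i < N (0-based). U_M: measurable maps [0,T] to [0,1]^N
  with componentwise sum at most M on [0,T].\<close>
definition U_M :: "nat \<Rightarrow> real \<Rightarrow> real \<Rightarrow> (real \<Rightarrow> nat \<Rightarrow> real) set" where
  "U_M N T M = {\<alpha>. (\<forall>i<N. (\<lambda>t. \<alpha> t i) \<in> borel_measurable (restrict_space lborel {0..T})) \<and>
      (\<forall>t\<in>{0..T}. (\<forall>i<N. \<alpha> t i \<in> {0..1}) \<and> (\<Sum>i<N. \<alpha> t i) \<le> M)}"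

end

theory Submission
  imports Defs
begin

text \<open>Projecting the dynamics on the initial direction \<open>e\<close> of the mean velocity gives scalar
  equations: the mean component obeys \<open>\<xi>bar' = - (mean of \<alpha>) \<xi>bar\<close> and each component obeys
  \<open>\<xi>\<^sub>i' = - \<xi>\<^sub>i + (1 - \<alpha>\<^sub>i) \<xi>bar\<close>. Since \<open>0 \<le> \<alpha> \<le> 1\<close>, both right-hand sides are bounded below by
  \<open>- max \<xi> 0\<close> (using \<open>\<xi>bar > 0\<close> for the second), and an integral inequality of this kind
  preserves nonnegativity and positivity forward in time.\<close>

lemma has_integral_increment:
  fixes g :: "real \<Rightarrow> 'a::banach"
  assumes base: "\<And>t. t \<in> {a..b} \<Longrightarrow> (g has_integral (F t - F a)) {a..t}"
    and st: "a \<le> s" "s \<le> t" "t \<le> b"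
  shows "(g has_integral (F t - F s)) {s..t}"
proof -
  have "g integrable_on {a..b}"
    using base[of b] st by (auto intro: has_integral_integrable)
  then obtain k where k: "(g has_integral k) {s..t}"
    using integrable_subinterval_real[of g a b s t] st by auto
  have "(g has_integral (F s - F a + k)) {a..t}"
    using has_integral_combine[OF st(1,2) base[of s] k] st by auto
  then have "F s - F a + k = F t - F a"
    by (rule has_integral_unique) (use base[of t] st in auto)
  then have "k = F t - F s"
    by (simp add: eq_diff_eq add.commute)
  with k show ?thesis
    by simp
qed

lemma has_integral_continuous_on:
  fixes g :: "real \<Rightarrow> 'a::banach"
  assumes base: "\<And>t. t \<in> {a..b} \<Longrightarrow> (g has_integral (F t - F a)) {a..t}"
  shows "continuous_on {a..b} F"
proof (cases "a \<le> b")
  case True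
  then have "g integrable_on {a..b}"
    using base[of b] by (auto intro: has_integral_integrable)
  then have "continuous_on {a..b} (\<lambda>t. F a + integral {a..t} g)"
    by (intro continuous_on_add continuous_on_const indefinite_integral_continuous_1)
  moreover have "F a + integral {a..t} g = F t" if "t \<in> {a..b}" for t
    using integral_unique[OF base[OF that]] by simp
  ultimately show ?thesis
    by (rule continuous_on_eq)
qed simp

lemma has_integral_inner_left:
  fixes f :: "'n::euclidean_space \<Rightarrow> 'a::real_inner"
  assumes "(f has_integral y) S"
  shows "((\<lambda>x. f x \<bullet> e) has_integral (y \<bullet> e)) S"
  using has_integral_linear[OF assms bounded_linear_inner_left[of e]] by (simp add: o_def)

text \<open>After the last time before \<open>t\<close> at which \<open>f \<ge> 0\<close>, the integrand is nonnegative,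
  so \<open>f\<close> cannot have decreased.\<close>

lemma integral_inequality_nonneg_persists:
  fixes f \<phi> :: "real \<Rightarrow> real"
  assumes base: "\<And>t. t \<in> {a..b} \<Longrightarrow> (\<phi> has_integral (f t - f a)) {a..t}"
    and lower: "\<And>r. r \<in> {a..b} \<Longrightarrow> \<phi> r \<ge> - L * max (f r) 0"
    and fa: "f a \<ge> 0" and t: "t \<in> {a..b}"
  shows "f t \<ge> 0"
proof (rule ccontr)
  assume ft: "\<not> f t \<ge> 0"
  define S where "S = {s \<in> {a..t}. 0 \<le> f s}"
  have "continuous_on {a..t} f"
    using has_integral_continuous_on[OF base] t by (auto intro: continuous_on_subset)
  then have "closed S"
    unfolding S_def by (rule continuous_on_closed_Collect_le[OF continuous_on_const _ closed_atLeastAtMost])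
  moreover have "a \<in> S" "bdd_above S"
    using t fa by (auto simp: S_def bdd_above_def)
  ultimately have t1S: "Sup S \<in> S"
    using closed_contains_Sup by blast
  have t1: "a \<le> Sup S" "Sup S < t"
    using t1S ft by (auto simp: S_def less_le)
  have neg: "f r < 0" if r: "r \<in> {Sup S<..<t}" for r
  proof (rule ccontr)
    assume "\<not> f r < 0"
    then have "r \<in> S"
      using r t1S by (auto simp: S_def)
    then show False
      using r cSup_upper[OF _ \<open>bdd_above S\<close>] by force
  qed
  have "(\<phi> has_integral (f t - f (Sup S))) {Sup S..t}"
    using has_integral_increment[where a = a and b = b, OF base t1(1)] t1 t by auto
  then have "(\<phi> has_integral (f t - f (Sup S))) {Sup S<..<t}"
    using has_integral_open_interval[of \<phi> _ "Sup S" t] by simp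
  moreover have "0 \<le> \<phi> r" if r: "r \<in> {Sup S<..<t}" for r
  proof -
    have "r \<in> {a..b}"
      using r t1 t by auto
    then show ?thesis
      using lower[of r] neg[OF r] by simp
  qed
  ultimately have "0 \<le> f t - f (Sup S)"
    using has_integral_le[OF has_integral_0] by blast
  then show False
    using t1S ft by (auto simp: S_def)
qed

text \<open>At the first zero \<open>t\<^sub>1\<close> of \<open>f\<close>, take the maximum \<open>f u\<close> of \<open>f\<close> on a window of length
  \<open>\<delta>\<close> before \<open>t\<^sub>1\<close>: the decay over the window is at most \<open>\<delta> L f u \<le> f u / 2\<close>.\<close>

lemma integral_inequality_pos_persists:
  fixes f \<phi> :: "real \<Rightarrow> real"
  assumes base: "\<And>t. t \<in> {a..b} \<Longrightarrow> (\<phi> has_integral (f t - f a)) {a..t}"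
    and lower: "\<And>r. r \<in> {a..b} \<Longrightarrow> \<phi> r \<ge> - L * max (f r) 0"
    and L: "L \<ge> 0" and fa: "f a > 0" and t: "t \<in> {a..b}"
  shows "f t > 0"
proof (rule ccontr)
  assume ft: "\<not> f t > 0"
  have nonneg: "\<And>r. r \<in> {a..b} \<Longrightarrow> f r \<ge> 0"
    using integral_inequality_nonneg_persists[OF base lower] fa by auto
  have cont: "continuous_on {a..b} f"
    by (rule has_integral_continuous_on[OF base])
  define Z where "Z = {s \<in> {a..t}. f s \<le> 0}"
  have "closed Z"
    unfolding Z_def using cont t
    by (intro continuous_on_closed_Collect_le) (auto intro: continuous_on_subset)
  moreover have "t \<in> Z" "bdd_below Z"
    using t ft by (auto simp: Z_def bdd_below_def)
  ultimately have t1Z: "Inf Z \<in> Z"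
    using closed_contains_Inf by blast
  define t1 where "t1 = Inf Z"
  have at1: "a < t1" and t1b: "t1 \<in> {a..b}"
    using t1Z fa t by (auto simp: Z_def t1_def less_le)
  have ft1: "f t1 = 0"
    using t1Z nonneg[OF t1b] by (auto simp: Z_def t1_def)
  have before: "f r > 0" if r: "r \<in> {a..<t1}" for r
  proof (rule ccontr)
    assume "\<not> f r > 0"
    then have "r \<in> Z"
      using r t1Z by (auto simp: Z_def t1_def)
    then show False
      using r cInf_lower[OF _ \<open>bdd_below Z\<close>] by (force simp: t1_def)
  qed
  define \<delta> where "\<delta> = 1 / (2 * L + 2)"
  define s where "s = max a (t1 - \<delta>)"
  have \<delta>: "\<delta> > 0" "\<delta> * L \<le> 1 / 2"
    using L by (auto simp: \<delta>_def field_simps)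
  have s: "a \<le> s" "s < t1"
    using at1 \<delta> by (auto simp: s_def)
  obtain u where u: "u \<in> {s..t1}" "\<And>y. y \<in> {s..t1} \<Longrightarrow> f y \<le> f u"
    using continuous_attains_sup[OF compact_Icc _ continuous_on_subset[OF cont, of "{s..t1}"]] s t1b
    by auto
  have fu: "f u > 0"
    using u(2)[of s] s before[of s] by auto
  have "(\<phi> has_integral (f t1 - f u)) {u..t1}"
    using has_integral_increment[where a = a and b = b, OF base] u s t1b by auto
  moreover have "((\<lambda>_. - L * f u) has_integral (t1 - u) * (- L * f u)) {u..t1}"
    using has_integral_const_real[of "- L * f u" u t1] u by simp
  moreover have "- L * f u \<le> \<phi> r" if r: "r \<in> {u..t1}" for r
  proof -
    have rb: "r \<in> {a..b}"
      using r u s t1b by auto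
    have "L * f r \<le> L * f u"
      using u r L by (auto intro: mult_left_mono)
    then show ?thesis
      using lower[OF rb] nonneg[OF rb] by auto
  qed
  ultimately have "(t1 - u) * (- L * f u) \<le> f t1 - f u"
    using has_integral_le by blast
  then have "f u \<le> (t1 - u) * L * f u"
    using ft1 by (simp add: algebra_simps)
  also have "\<dots> \<le> \<delta> * L * f u"
    using u fu L by (intro mult_right_mono) (auto simp: s_def)
  also have "\<dots> \<le> f u / 2"
    using mult_right_mono[OF \<delta>(2), of "f u"] fu by simp
  finally show False
    using fu by simp
qed

locale alignment_dynamics =
  fixes N :: nat and T :: real and \<alpha> :: "real \<Rightarrow> nat \<Rightarrow> real"
    and v :: "real \<Rightarrow> nat \<Rightarrow> 'a::euclidean_space"
  assumes N_pos: "N \<ge> 1"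
    and control_range: "\<And>t i. t \<in> {0..T} \<Longrightarrow> i < N \<Longrightarrow> \<alpha> t i \<in> {0..1}"
    and velocity_eq: "\<And>i t. i < N \<Longrightarrow> t \<in> {0..T} \<Longrightarrow>
      ((\<lambda>s. (- \<alpha> s i) *\<^sub>R v s i + (1 - \<alpha> s i) *\<^sub>R ((1 / real N) *\<^sub>R (\<Sum>j<N. v s j - v s i)))
        has_integral (v t i - v 0 i)) {0..t}"
begin

definition mean_velocity :: "real \<Rightarrow> 'a" where
  "mean_velocity t = (1 / real N) *\<^sub>R (\<Sum>i<N. v t i)"

definition mean_control :: "real \<Rightarrow> real" where
  "mean_control t = (1 / real N) * (\<Sum>i<N. \<alpha> t i)"

lemma mean_control_range: "t \<in> {0..T} \<Longrightarrow> mean_control t \<in> {0..1}"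
proof -
  assume t: "t \<in> {0..T}"
  have "(\<Sum>i<N. \<alpha> t i) \<le> (\<Sum>i<N. 1)"
    by (rule sum_mono) (use control_range[OF t] in auto)
  moreover have "0 \<le> (\<Sum>i<N. \<alpha> t i)"
    by (rule sum_nonneg) (use control_range[OF t] in auto)
  ultimately show ?thesis
    using N_pos by (auto simp: mean_control_def field_simps)
qed

lemma sum_velocity: "(\<Sum>i<N. v t i) = real N *\<^sub>R mean_velocity t"
  using N_pos by (simp add: mean_velocity_def)

lemma velocity_has_integral:
  assumes "i < N" "t \<in> {0..T}"
  shows "((\<lambda>s. (1 - \<alpha> s i) *\<^sub>R mean_velocity s - v s i) has_integral (v t i - v 0 i)) {0..t}"
proof -
  have deviation: "(1 / real N) *\<^sub>R (\<Sum>j<N. v s j - v s i) = mean_velocity s - v s i" for s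
    using N_pos by (simp add: sum_velocity sum_subtractf scaleR_diff_right sum_constant_scaleR)
  have "(- \<alpha> s i) *\<^sub>R v s i + (1 - \<alpha> s i) *\<^sub>R ((1 / real N) *\<^sub>R (\<Sum>j<N. v s j - v s i))
      = (1 - \<alpha> s i) *\<^sub>R mean_velocity s - v s i" for s
    unfolding deviation by (simp add: algebra_simps)
  then show ?thesis
    using velocity_eq[OF assms] by simp
qed

lemma mean_velocity_has_integral:
  assumes "t \<in> {0..T}"
  shows "((\<lambda>s. - mean_control s *\<^sub>R mean_velocity s)
    has_integral (mean_velocity t - mean_velocity 0)) {0..t}"
proof -
  have "((\<lambda>s. (1 / real N) *\<^sub>R (\<Sum>i<N. (1 - \<alpha> s i) *\<^sub>R mean_velocity s - v s i))
      has_integral (1 / real N) *\<^sub>R (\<Sum>i<N. v t i - v 0 i)) {0..t}"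
    using assms by (intro has_integral_cmul has_integral_sum velocity_has_integral) auto
  moreover have "(1 / real N) *\<^sub>R (\<Sum>i<N. (1 - \<alpha> s i) *\<^sub>R mean_velocity s - v s i)
      = - mean_control s *\<^sub>R mean_velocity s" for s
  proof -
    have "(\<Sum>i<N. (1 - \<alpha> s i) *\<^sub>R mean_velocity s - v s i) = - (\<Sum>i<N. \<alpha> s i) *\<^sub>R mean_velocity s"
      by (simp add: sum_subtractf scaleR_sum_left[symmetric] sum_velocity scaleR_diff_left
          sum_constant_scaleR)
    then show ?thesis
      by (simp add: mean_control_def)
  qed
  moreover have "(1 / real N) *\<^sub>R (\<Sum>i<N. v t i - v 0 i) = mean_velocity t - mean_velocity 0"
    by (simp add: mean_velocity_def sum_subtractf scaleR_diff_right)
  ultimately show ?thesis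
    by simp
qed

lemma mean_velocity_component_pos:
  assumes e: "mean_velocity 0 \<bullet> e > 0" and t: "t \<in> {0..T}"
  shows "mean_velocity t \<bullet> e > 0"
proof (rule integral_inequality_pos_persists[where f = "\<lambda>s. mean_velocity s \<bullet> e" and L = 1])
  show "((\<lambda>s. - mean_control s * (mean_velocity s \<bullet> e))
      has_integral (mean_velocity t' \<bullet> e - mean_velocity 0 \<bullet> e)) {0..t'}" if "t' \<in> {0..T}" for t'
    using has_integral_inner_left[OF mean_velocity_has_integral[OF that], of e]
    by (simp add: inner_diff_left)
  show "- 1 * max (mean_velocity r \<bullet> e) 0 \<le> - mean_control r * (mean_velocity r \<bullet> e)"
    if "r \<in> {0..T}" for r
    using mean_control_range[OF that]
    by (cases "mean_velocity r \<bullet> e \<ge> 0") (auto simp: mult_left_le_one_le mult_nonneg_nonpos)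
qed (use e t in auto)

lemma velocity_component_sign_persists:
  assumes e: "mean_velocity 0 \<bullet> e > 0" and i: "i < N" and \<tau>: "\<tau> \<in> {0..T}"
    and t: "t \<in> {\<tau>..T}"
  shows "(v \<tau> i \<bullet> e \<ge> 0 \<longrightarrow> v t i \<bullet> e \<ge> 0) \<and> (v \<tau> i \<bullet> e > 0 \<longrightarrow> v t i \<bullet> e > 0)"
proof -
  define \<phi> where "\<phi> = (\<lambda>s. (1 - \<alpha> s i) * (mean_velocity s \<bullet> e) - v s i \<bullet> e)"
  have from_0: "(\<phi> has_integral (v t' i \<bullet> e - v 0 i \<bullet> e)) {0..t'}" if "t' \<in> {0..T}" for t'
    using has_integral_inner_left[OF velocity_has_integral[OF i that], of e]
    by (simp add: \<phi>_def inner_diff_left)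
  have base: "(\<phi> has_integral (v t' i \<bullet> e - v \<tau> i \<bullet> e)) {\<tau>..t'}" if "t' \<in> {\<tau>..T}" for t'
    using has_integral_increment[where a = 0 and b = T, OF from_0] \<tau> that by auto
  have lower: "- 1 * max (v r i \<bullet> e) 0 \<le> \<phi> r" if "r \<in> {\<tau>..T}" for r
  proof -
    have r: "r \<in> {0..T}"
      using \<tau> that by auto
    have "0 \<le> (1 - \<alpha> r i) * (mean_velocity r \<bullet> e)"
      using control_range[OF r i] mean_velocity_component_pos[OF e r] by simp
    then show ?thesis
      by (auto simp: \<phi>_def max_def)
  qed
  show ?thesis
    using integral_inequality_nonneg_persists[OF base lower] integral_inequality_pos_persists[OF base lower] t
    by auto
qed

end

theorem proposition1:
  fixes N :: nat and T M :: real
    and \<alpha> :: "real \<Rightarrow> nat \<Rightarrow> real"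
    and x v :: "real \<Rightarrow> nat \<Rightarrow> real ^ 'd"
  assumes N: "N \<ge> 1" and T: "T > 0" and M: "M > 0"
    and alpha: "\<alpha> \<in> U_M N T M"
    and solx: "\<forall>i<N. \<forall>t\<in>{0..T}. ((\<lambda>s. v s i) has_integral (x t i - x 0 i)) {0..t}"
    and solv: "\<forall>i<N. \<forall>t\<in>{0..T}.
       ((\<lambda>s. (- \<alpha> s i) *\<^sub>R v s i
              + (1 - \<alpha> s i) *\<^sub>R ((1 / real N) *\<^sub>R (\<Sum>j<N. v s j - v s i))) has_integral (v t i - v 0 i)) {0..t}"
    and vbar_def: "vbar = (\<lambda>t. (1 / real N) *\<^sub>R (\<Sum>i<N. v t i))"
    and v0: "vbar 0 \<noteq> 0"
    and e_def: "e = vbar 0 /\<^sub>R norm (vbar 0)"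
    and xi_def: "\<xi> = (\<lambda>i t. v t i \<bullet> e)"
    and xibar_def: "\<xi>bar = (\<lambda>t. (1 / real N) * (\<Sum>i<N. \<xi> i t))"
    and ordered: "\<forall>i j. i \<le> j \<and> j < N \<longrightarrow> \<xi> j 0 \<le> \<xi> i 0"
  shows "(\<forall>t\<in>{0..T}. vbar t \<noteq> 0 \<and> \<xi>bar t > 0) \<and>
         (\<forall>\<tau>\<in>{0..T}. \<forall>i<N.
            (\<xi> i \<tau> \<ge> 0 \<longrightarrow> (\<forall>t\<in>{\<tau>..T}. \<xi> i t \<ge> 0)) \<and>
            (\<xi> i \<tau> > 0 \<longrightarrow> (\<forall>t\<in>{\<tau>..T}. \<xi> i t > 0)))"
proof -
  interpret alignment_dynamics N T \<alpha> v
    using N alpha solv by unfold_locales (auto simp: U_M_def)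
  have vbar: "vbar = mean_velocity"
    by (simp add: vbar_def mean_velocity_def fun_eq_iff)
  have xibar: "\<xi>bar t = vbar t \<bullet> e" for t
    by (simp add: xibar_def xi_def vbar_def inner_sum_left sum_distrib_left)
  have "vbar 0 \<bullet> e = norm (vbar 0)"
    using v0 by (simp add: e_def power2_norm_eq_inner[symmetric] power2_eq_square)
  then have start: "mean_velocity 0 \<bullet> e > 0"
    using v0 vbar by simp
  have pos: "\<xi>bar t > 0" if "t \<in> {0..T}" for t
    using mean_velocity_component_pos[OF start that] by (simp add: xibar vbar)
  moreover have "vbar t \<noteq> 0" if "t \<in> {0..T}" for t
    using pos[OF that] by (auto simp: xibar)
  ultimately show ?thesis
    using velocity_component_sign_persists[OF start] by (auto simp: xi_def)
qed

end
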